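(* Let $d=1$, let $(X,M)$ have joint law $\mathbb{P}_{X,M}$ with $X\in\mathbb{R}$ and $M\in\{0,1\}$ ($M=0$: $X$ observed), and assume the model $\{P_\theta:\theta\in\Theta\}$ is well specified: $\mathbb{P}_X=P_{\theta^*}$ for some $\theta^*\in\Theta$. Let $\pi(x)=\mathbb{P}[M=0\mid X=x]$ and $\pi=\mathbb{P}[M=0]=\mathbb{E}_{X\sim\mathbb{P}_X}[\pi(X)]>0$, and let $$\theta_\infty^{\mathrm{ML}}\in\arg\min_{\theta\in\Theta}\mathbb{E}_{M\sim\mathbb{P}_M}\big[\mathrm{KL}(\mathbb{P}_{X\mid M}^{(M)}\,\|\,P_\theta^{(M)})\big]=\arg\min_{\theta\in\Theta}\mathrm{KL}(\mathbb{P}_{X\mid M=0}\,\|\,P_\theta).$$ Then $$ \mathrm{TV}^2\big(P_{\theta_\infty^{\mathrm{ML}}},P_{\theta^*}\big)\le 2\cdot\frac{\mathbb{V}_{X\sim\mathbb{P}_X}[\pi(X)]}{\pi^2}. $$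
   Context: $\mathbb{P}_X$ is the law of $X$ (with a Lebesgue density), $\mathbb{P}_{X\mid M=0}$ the conditional law of $X$ given $M=0$. In expectations over $M$ the empty pattern ($M=1$, i.e. $X$ missing) is excluded, which is why the middle expression reduces to the last one. $\mathrm{KL}(P_1\|P_2)=\int\log(p_1/p_2)p_1$ if $P_1\ll P_2$ and $+\infty$ otherwise; $\mathrm{TV}$ is the total variation distance. $\{P_\theta\}$ is a parametric family of distributions on $\mathbb{R}$ with Lebesgue densities. *)

theory Defs
  imports "HOL-Analysis.Analysis"
begin

definition TV_dist :: "real measure \<Rightarrow> real measure \<Rightarrow> real" where
  "TV_dist P Q = (SUP A \<in> sets borel. \<bar>measure P A - measure Q A\<bar>)"

text \<open>The integral is taken as positive part minus negative part
  (the negative part is always finite for probability densities).\<close>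
definition KL_div :: "(real \<Rightarrow> real) \<Rightarrow> (real \<Rightarrow> real) \<Rightarrow> ereal" where
  "KL_div p q =
     (if AE x in lborel. q x = 0 \<longrightarrow> p x = 0
      then enn2ereal (\<integral>\<^sup>+ x. ennreal (p x * ln (p x / q x)) \<partial>lborel)
         - enn2ereal (\<integral>\<^sup>+ x. ennreal (- (p x * ln (p x / q x))) \<partial>lborel)
      else \<infinity>)"

definition is_density :: "(real \<Rightarrow> real) \<Rightarrow> bool" where
  "is_density p \<longleftrightarrow> p \<in> borel_measurable borel \<and> (\<forall>x. 0 \<le> p x)
     \<and> (\<integral>\<^sup>+ x. ennreal (p x) \<partial>lborel) = 1"

end

theory Submission
  imports Defs
begin

text \<open>Write g for the true density, c = P[M = 0] and p = \<pi> g / c for the density of the observed X.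
  Since ln t \<le> t - 1, KL(p || g) is at most the chi-square divergence of p from g, which equals
  Var(\<pi>(X)) / c^2; by minimality the ML limit q satisfies the same bound on KL(p || q).
  Pinsker's inequality ||p - r||_1 \<le> sqrt (2 KL(p || r)), applied with r = g and r = q, and the
  triangle inequality give ||q - g||_1 \<le> 2 sqrt (2 Var / c^2), while TV(q, g) \<le> ||q - g||_1 / 2.\<close>

lemma one_minus_inverse_le_ln:
  assumes "0 < (t::real)"
  shows "1 - 1 / t \<le> ln t"
proof -
  have "ln (1 / t) \<le> 1 / t - 1"
    using assms by (intro ln_le_minus_one) simp
  then show ?thesis
    using assms by (simp add: ln_div)
qed

lemma diff_le_mult_ln_divide:
  fixes p q :: real
  assumes "0 \<le> p" "0 \<le> q" "q = 0 \<longrightarrow> p = 0"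
  shows "p - q \<le> p * ln (p / q)"
proof (cases "p = 0")
  case False
  then have "0 < p" "0 < q" using assms by auto
  then have "p * (1 - q / p) \<le> p * ln (p / q)"
    using one_minus_inverse_le_ln[of "p / q"] by (intro mult_left_mono) auto
  then show ?thesis using \<open>0 < p\<close> by (simp add: algebra_simps)
qed (use assms in simp)

lemma add_one_mult_ln_minus_mono:
  fixes x y :: real
  assumes "0 < x" "x \<le> y"
  shows "(x + 1) * ln x - 2 * (x - 1) \<le> (y + 1) * ln y - 2 * (y - 1)"
proof (rule DERIV_nonneg_imp_nondecreasing[OF assms(2)])
  fix t assume "x \<le> t"
  then have "0 < t" using assms(1) by simp
  have "((\<lambda>x. (x + 1) * ln x - 2 * (x - 1)) has_real_derivative ln t - (1 - 1 / t)) (at t)"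
    using \<open>0 < t\<close> by (auto intro!: derivative_eq_intros simp: divide_simps)
  then show "\<exists>y. ((\<lambda>x. (x + 1) * ln x - 2 * (x - 1)) has_real_derivative y) (at t) \<and> 0 \<le> y"
    using one_minus_inverse_le_ln[OF \<open>0 < t\<close>] by auto
qed

lemma pinsker_scalar:
  fixes x :: real
  assumes "0 \<le> x"
  shows "3 * (x - 1)\<^sup>2 \<le> (2 * x + 4) * (x * ln x - x + 1)"
proof (cases "x = 0")
  case False
  then have "0 < x" using assms by simp
  define h :: "real \<Rightarrow> real" where "h = (\<lambda>x. (2 * x + 4) * (x * ln x - x + 1) - 3 * (x - 1)\<^sup>2)"
  have h_deriv: "(h has_real_derivative 4 * ((t + 1) * ln t - 2 * (t - 1))) (at t)" if "0 < t" for t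
    unfolding h_def using that
    by (auto intro!: derivative_eq_intros) (simp add: algebra_simps power2_eq_square)
  have "h 1 \<le> h x"
  proof (cases "1 \<le> x")
    case True
    show ?thesis
    proof (rule DERIV_nonneg_imp_nondecreasing[OF True])
      fix t :: real assume "1 \<le> t"
      then show "\<exists>y. (h has_real_derivative y) (at t) \<and> 0 \<le> y"
        using h_deriv[of t] add_one_mult_ln_minus_mono[of 1 t] by auto
    qed
  next
    case False
    show ?thesis
    proof (rule DERIV_nonpos_imp_nonincreasing[of x 1])
      fix t :: real assume "x \<le> t" "t \<le> 1"
      then show "\<exists>y. (h has_real_derivative y) (at t) \<and> y \<le> 0"
        using h_deriv[of t] add_one_mult_ln_minus_mono[of t 1] \<open>0 < x\<close> by auto
    qed (use False in simp)
  qed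
  then show ?thesis by (simp add: h_def)
qed simp

lemma mult_le_power2_scaled_add:
  fixes a b l :: real
  assumes "0 < l"
  shows "a * b \<le> (l * a / 2 + b / (2 * l))\<^sup>2"
proof -
  have "(l * a / 2 + b / (2 * l))\<^sup>2 = (l * a / 2 - b / (2 * l))\<^sup>2 + a * b"
    using assms by (simp add: power2_eq_square field_simps)
  then show ?thesis by simp
qed

lemma pinsker_pointwise:
  fixes p q l :: real
  assumes "0 \<le> p" "0 \<le> q" "q = 0 \<longrightarrow> p = 0" "0 < l"
  shows "\<bar>p - q\<bar> \<le> l * (2 * p + 4 * q) / 6 + (p * ln (p / q) - p + q) / (2 * l)"
proof -
  define A where "A = (2 * p + 4 * q) / 3"
  define F where "F = p * ln (p / q) - p + q"
  have "0 \<le> F" using diff_le_mult_ln_divide[OF assms(1-3)] by (simp add: F_def)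
  have "0 \<le> A" using assms by (simp add: A_def)
  have "(p - q)\<^sup>2 \<le> A * F"
  proof (cases "q = 0")
    case True then show ?thesis using assms by (simp add: A_def F_def)
  next
    case False
    then have q: "0 < q" using assms by simp
    define x where "x = p / q"
    have x0: "0 \<le> x" using assms q by (simp add: x_def)
    have px: "p = x * q" using q by (simp add: x_def)
    have "3 * (x - 1)\<^sup>2 \<le> (2 * x + 4) * (x * ln x - x + 1)" by (rule pinsker_scalar[OF x0])
    then have "q\<^sup>2 * (3 * (x - 1)\<^sup>2) \<le> q\<^sup>2 * ((2 * x + 4) * (x * ln x - x + 1))"
      by (intro mult_left_mono) auto
    moreover have "q\<^sup>2 * (3 * (x - 1)\<^sup>2) = 3 * (p - q)\<^sup>2"
      by (simp add: px power2_eq_square algebra_simps)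
    moreover have "q\<^sup>2 * ((2 * x + 4) * (x * ln x - x + 1)) = 3 * (A * F)"
      by (simp add: A_def F_def x_def[symmetric] px power2_eq_square algebra_simps)
    ultimately show ?thesis by simp
  qed
  also have "A * F \<le> (l * A / 2 + F / (2 * l))\<^sup>2"
    by (rule mult_le_power2_scaled_add[OF assms(4)])
  finally have "\<bar>p - q\<bar>\<^sup>2 \<le> (l * A / 2 + F / (2 * l))\<^sup>2"
    by (simp add: power2_abs)
  then have "\<bar>p - q\<bar> \<le> l * A / 2 + F / (2 * l)"
    by (rule power2_le_imp_le) (use \<open>0 \<le> A\<close> \<open>0 \<le> F\<close> assms(4) in simp)
  then show ?thesis by (simp add: A_def F_def)
qed

lemma le_sqrt_if_le_add_divide:
  fixes x B :: real
  assumes "0 \<le> B" and le: "\<And>l. 0 < l \<Longrightarrow> x \<le> l + B / (2 * l)"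
  shows "x \<le> sqrt (2 * B)"
proof (cases "B = 0")
  case True
  have "x \<le> 0 + e" if "0 < e" for e using le[OF that] True by simp
  then show ?thesis using True by (simp add: field_le_epsilon)
next
  case False
  then have "0 < B" using assms(1) by simp
  define l where "l = sqrt (B / 2)"
  have "0 < l" using \<open>0 < B\<close> by (simp add: l_def)
  have "B / (2 * l) = l"
    using \<open>0 < B\<close> by (simp add: l_def field_simps real_sqrt_divide)
  moreover have "l + l = sqrt (2 * B)"
    using \<open>0 < B\<close> by (simp add: l_def real_sqrt_divide real_sqrt_mult field_simps)
  ultimately show ?thesis using le[OF \<open>0 < l\<close>] by simp
qed

lemma is_densityD:
  assumes "is_density p"
  shows "p \<in> borel_measurable lborel" "\<And>x. 0 \<le> p x" "integrable lborel p"
    "(\<integral>x. p x \<partial>lborel) = 1"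
proof -
  show meas: "p \<in> borel_measurable lborel" and nonneg: "\<And>x. 0 \<le> p x"
    using assms by (auto simp: is_density_def)
  have "(\<integral>\<^sup>+ x. ennreal (p x) \<partial>lborel) = 1" using assms by (simp add: is_density_def)
  then show int: "integrable lborel p" using meas nonneg by (intro integrableI_nonneg) auto
  have "ennreal (\<integral>x. p x \<partial>lborel) = 1"
    using nn_integral_eq_integral[OF int] nonneg \<open>(\<integral>\<^sup>+ x. ennreal (p x) \<partial>lborel) = 1\<close> by simp
  then show "(\<integral>x. p x \<partial>lborel) = 1" by simp
qed

lemma is_densityI:
  assumes "p \<in> borel_measurable borel" "\<And>x. 0 \<le> p x" "integrable lborel p"
    "(\<integral>x. p x \<partial>lborel) = 1"
  shows "is_density p"
  using assms nn_integral_eq_integral[OF assms(3)] by (simp add: is_density_def)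

lemma measure_density_eq_integral:
  assumes "is_density p" "A \<in> sets borel"
  shows "measure (density lborel p) A = (\<integral>x. p x * indicator A x \<partial>lborel)"
proof -
  note P = is_densityD[OF assms(1)]
  have int: "integrable lborel (\<lambda>x. p x * indicator A x)"
    using P(3) assms(2) by (intro integrable_real_mult_indicator) simp_all
  have "emeasure (density lborel p) A = (\<integral>\<^sup>+ x. ennreal (p x * indicator A x) \<partial>lborel)"
    using P assms(2) by (subst emeasure_density) (auto intro!: nn_integral_cong simp: indicator_def)
  also have "\<dots> = ennreal (\<integral>x. p x * indicator A x \<partial>lborel)"
    using int P by (intro nn_integral_eq_integral) auto
  finally show ?thesis
    unfolding measure_def using P by (simp add: integral_nonneg indicator_def)
qed

lemma TV_dist_density_le_integral_abs_diff:
  assumes p: "is_density p" and q: "is_density q"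
  shows "0 \<le> TV_dist (density lborel p) (density lborel q)"
    and "TV_dist (density lborel p) (density lborel q) \<le> (\<integral>x. \<bar>p x - q x\<bar> \<partial>lborel) / 2"
proof -
  note P = is_densityD[OF p] and Q = is_densityD[OF q]
  let ?L1 = "\<integral>x. \<bar>p x - q x\<bar> \<partial>lborel"
  have set_bound: "\<bar>measure (density lborel p) A - measure (density lborel q) A\<bar> \<le> ?L1 / 2"
    if A: "A \<in> sets borel" for A
  proof -
    define s :: "real \<Rightarrow> real" where "s x = 2 * indicator A x - 1" for x
    have s_abs: "\<bar>s x\<bar> = 1" for x by (cases "x \<in> A") (simp_all add: s_def)
    have "A \<in> sets lborel" using A by simp
    note int_A = integrable_real_mult_indicator[OF this]
    have s_expand: "(p x - q x) * s x
        = 2 * (p x * indicator A x) - 2 * (q x * indicator A x) - (p x - q x)" for x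
      by (simp add: s_def algebra_simps)
    have int_s: "integrable lborel (\<lambda>x. (p x - q x) * s x)"
      unfolding s_expand using P(3) Q(3) int_A[OF P(3)] int_A[OF Q(3)] by simp
    have "2 * (measure (density lborel p) A - measure (density lborel q) A)
        = (\<integral>x. (p x - q x) * s x \<partial>lborel)"
      unfolding s_expand using P(3,4) Q(3,4) int_A[OF P(3)] int_A[OF Q(3)]
      by (simp add: measure_density_eq_integral[OF p A] measure_density_eq_integral[OF q A])
    also have "\<bar>\<dots>\<bar> \<le> ?L1"
      using int_s P(3) Q(3) by (intro integral_abs_bound_integral) (auto simp: abs_mult s_abs)
    finally show ?thesis unfolding abs_mult by simp
  qed
  have bdd: "bdd_above ((\<lambda>A. \<bar>measure (density lborel p) A - measure (density lborel q) A\<bar>) ` sets borel)"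
    using set_bound by (intro bdd_aboveI2[where M = "?L1 / 2"]) auto
  show "0 \<le> TV_dist (density lborel p) (density lborel q)"
    unfolding TV_dist_def using cSUP_upper[OF _ bdd, of "{}"] by simp
  show "TV_dist (density lborel p) (density lborel q) \<le> ?L1 / 2"
    unfolding TV_dist_def using set_bound by (intro cSUP_least) auto
qed

lemma KL_div_eq_integral:
  assumes "integrable lborel (\<lambda>x. p x * ln (p x / q x))"
    and "AE x in lborel. q x = 0 \<longrightarrow> p x = 0"
  shows "KL_div p q = ereal (\<integral>x. p x * ln (p x / q x) \<partial>lborel)"
proof -
  let ?P = "\<integral>\<^sup>+ x. ennreal (p x * ln (p x / q x)) \<partial>lborel"
  let ?N = "\<integral>\<^sup>+ x. ennreal (- (p x * ln (p x / q x))) \<partial>lborel"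
  have "?P \<noteq> \<infinity>" "?N \<noteq> \<infinity>" using assms(1) unfolding real_integrable_def by auto
  then have "enn2ereal ?P = ereal (enn2real ?P)" "enn2ereal ?N = ereal (enn2real ?N)"
    by (auto simp: ennreal_enn2real_if enn2ereal_ennreal[symmetric] top.not_eq_extremum
        simp del: enn2ereal_ennreal)
  then show ?thesis
    unfolding KL_div_def using assms(2) real_lebesgue_integral_def[OF assms(1)] by simp
qed

text \<open>The negative part of the KL integrand is at most q, so a finite bound on the
  divergence forces integrability.\<close>
lemma KL_div_finiteD:
  assumes p: "is_density p" and q: "is_density q" and KL: "KL_div p q \<le> ereal B"
  shows "AE x in lborel. q x = 0 \<longrightarrow> p x = 0"
    and "integrable lborel (\<lambda>x. p x * ln (p x / q x))"
    and "(\<integral>x. p x * ln (p x / q x) \<partial>lborel) \<le> B"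
proof -
  note P = is_densityD[OF p] and Q = is_densityD[OF q]
  show ae: "AE x in lborel. q x = 0 \<longrightarrow> p x = 0"
  proof (rule ccontr)
    assume "\<not> ?thesis"
    then show False using KL by (simp add: KL_div_def)
  qed
  let ?h = "\<lambda>x. p x * ln (p x / q x)"
  let ?P = "\<integral>\<^sup>+ x. ennreal (?h x) \<partial>lborel"
  let ?N = "\<integral>\<^sup>+ x. ennreal (- ?h x) \<partial>lborel"
  have "?N \<le> (\<integral>\<^sup>+ x. ennreal (q x) \<partial>lborel)"
    using ae
  proof (intro nn_integral_mono_AE, eventually_elim)
    case (elim x)
    then show ?case
      using diff_le_mult_ln_divide[of "p x" "q x"] P(2)[of x] Q(2)[of x] by (intro ennreal_leI) auto
  qed
  also have "\<dots> < \<infinity>" using Q(3) Q(2) by (simp add: nn_integral_eq_integral)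
  finally have "?N \<noteq> \<infinity>" by simp
  moreover have "KL_div p q = enn2ereal ?P - enn2ereal ?N"
    unfolding KL_div_def using ae by simp
  ultimately have "?P \<noteq> \<infinity>"
    using KL by (auto simp: enn2ereal_top)
  moreover have "?h \<in> borel_measurable lborel" using P(1) Q(1) by measurable
  ultimately show int: "integrable lborel ?h"
    using \<open>?N \<noteq> \<infinity>\<close> unfolding real_integrable_def by simp
  show "(\<integral>x. ?h x \<partial>lborel) \<le> B"
    using KL_div_eq_integral[OF int ae] KL by simp
qed

lemma KL_div_le_chi_square:
  assumes g: "is_density g" and r_meas: "r \<in> borel_measurable borel" and r_nonneg: "\<And>x. 0 \<le> r x"
    and r_sq: "integrable lborel (\<lambda>x. (r x)\<^sup>2 * g x)" and r_norm: "(\<integral>x. r x * g x \<partial>lborel) = 1"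
  shows "KL_div (\<lambda>x. r x * g x) g \<le> ereal (\<integral>x. (r x - 1)\<^sup>2 * g x \<partial>lborel)"
proof -
  note G = is_densityD[OF g]
  have r_int: "integrable lborel (\<lambda>x. r x * g x)"
  proof (rule Bochner_Integration.integrable_bound)
    show "integrable lborel (\<lambda>x. g x + (r x)\<^sup>2 * g x)" using G(3) r_sq by simp
    show "(\<lambda>x. r x * g x) \<in> borel_measurable lborel" using r_meas G(1) by measurable
    have "r x \<le> 1 + (r x)\<^sup>2" for x
      using sum_power2_ge_zero[of "r x - 1/2" 0] by (simp add: power2_eq_square algebra_simps)
    then have "r x * g x \<le> (1 + (r x)\<^sup>2) * g x" for x
      using G(2) by (rule mult_right_mono)
    then show "AE x in lborel. norm (r x * g x) \<le> norm (g x + (r x)\<^sup>2 * g x)"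
      using G(2) r_nonneg by (intro AE_I2) (simp add: distrib_right)
  qed
  define h where "h x = r x * g x * ln (r x * g x / g x)" for x
  have h_upper: "h x \<le> (r x)\<^sup>2 * g x - r x * g x" for x
  proof (cases "g x = 0 \<or> r x = 0")
    case False
    then have "0 < g x" "0 < r x" using G(2)[of x] r_nonneg[of x] by auto
    then have "r x * g x * ln (r x) \<le> r x * g x * (r x - 1)"
      by (intro mult_left_mono ln_le_minus_one) auto
    then show ?thesis using \<open>0 < g x\<close> by (simp add: h_def power2_eq_square algebra_simps)
  qed (auto simp: h_def)
  have h_lower: "r x * g x - g x \<le> h x" for x
    unfolding h_def using diff_le_mult_ln_divide[of "r x * g x" "g x"] G(2)[of x] r_nonneg[of x] by simp
  have h_int: "integrable lborel h"
  proof (rule Bochner_Integration.integrable_bound)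
    show "integrable lborel (\<lambda>x. \<bar>r x * g x - g x\<bar> + \<bar>(r x)\<^sup>2 * g x - r x * g x\<bar>)"
      using r_int G(3) r_sq by simp
    show "h \<in> borel_measurable lborel" unfolding h_def using r_meas G(1) by measurable
    show "AE x in lborel. norm (h x) \<le> norm (\<bar>r x * g x - g x\<bar> + \<bar>(r x)\<^sup>2 * g x - r x * g x\<bar>)"
      using h_upper h_lower by (intro AE_I2) (smt (verit) real_norm_def)
  qed
  have "KL_div (\<lambda>x. r x * g x) g = ereal (\<integral>x. h x \<partial>lborel)"
    unfolding h_def using h_int[unfolded h_def[abs_def]] by (rule KL_div_eq_integral) simp
  also have "(\<integral>x. h x \<partial>lborel) \<le> (\<integral>x. (r x)\<^sup>2 * g x - r x * g x \<partial>lborel)"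
    using h_int r_sq r_int h_upper by (intro integral_mono) auto
  also have "\<dots> = (\<integral>x. (r x - 1)\<^sup>2 * g x \<partial>lborel)"
  proof -
    have "(r x - 1)\<^sup>2 * g x = ((r x)\<^sup>2 * g x - 2 * (r x * g x)) + g x" for x
      by (simp add: power2_eq_square algebra_simps)
    then show ?thesis using r_sq r_int G(3,4) r_norm by simp
  qed
  finally show ?thesis by simp
qed

lemma integral_abs_diff_le_sqrt_KL_div:
  assumes p: "is_density p" and q: "is_density q" and KL: "KL_div p q \<le> ereal B"
  shows "(\<integral>x. \<bar>p x - q x\<bar> \<partial>lborel) \<le> sqrt (2 * B)"
proof -
  note P = is_densityD[OF p] and Q = is_densityD[OF q]
  define h where "h = (\<lambda>x. p x * ln (p x / q x))"
  note KL_facts = KL_div_finiteD[OF p q KL, folded h_def]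
  have "0 \<le> (\<integral>x. h x \<partial>lborel)"
  proof -
    have "AE x in lborel. p x - q x \<le> h x"
      using KL_facts(1)
    proof eventually_elim
      case (elim x)
      then show ?case using diff_le_mult_ln_divide[OF P(2) Q(2)] by (simp add: h_def)
    qed
    then have "(\<integral>x. p x - q x \<partial>lborel) \<le> (\<integral>x. h x \<partial>lborel)"
      using P(3) Q(3) KL_facts(2) by (intro integral_mono_AE) auto
    then show ?thesis using P(3,4) Q(3,4) by simp
  qed
  moreover have "(\<integral>x. \<bar>p x - q x\<bar> \<partial>lborel) \<le> l + (\<integral>x. h x \<partial>lborel) / (2 * l)"
    if "0 < l" for l
  proof -
    let ?R = "\<lambda>x. l * (2 * p x + 4 * q x) / 6 + (h x - p x + q x) / (2 * l)"
    have R_int: "has_bochner_integral lborel ?R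
        (l * (2 * 1 + 4 * 1) / 6 + ((\<integral>x. h x \<partial>lborel) - 1 + 1) / (2 * l))"
      using P(3,4) Q(3,4) KL_facts(2)
      by (intro has_bochner_integral_add has_bochner_integral_diff has_bochner_integral_divide_zero
          has_bochner_integral_mult_right) (auto dest: has_bochner_integral_integrable)
    have "AE x in lborel. \<bar>p x - q x\<bar> \<le> ?R x"
      using KL_facts(1)
    proof eventually_elim
      case (elim x)
      then show ?case using pinsker_pointwise[OF P(2) Q(2) _ that] by (simp add: h_def)
    qed
    then have "(\<integral>x. \<bar>p x - q x\<bar> \<partial>lborel) \<le> (\<integral>x. ?R x \<partial>lborel)"
      using P(3) Q(3) integrable.intros[OF R_int] by (intro integral_mono_AE) auto
    then show ?thesis
      using has_bochner_integral_integral_eq[OF R_int] by simp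
  qed
  ultimately have "(\<integral>x. \<bar>p x - q x\<bar> \<partial>lborel) \<le> sqrt (2 * (\<integral>x. h x \<partial>lborel))"
    by (rule le_sqrt_if_le_add_divide)
  also have "\<dots> \<le> sqrt (2 * B)"
    using KL_facts(3) by simp
  finally show ?thesis .
qed

lemma integral_abs_diff_triangle:
  fixes f g h :: "'a \<Rightarrow> real"
  assumes "integrable M f" "integrable M g" "integrable M h"
  shows "(\<integral>x. \<bar>g x - h x\<bar> \<partial>M) \<le> (\<integral>x. \<bar>f x - g x\<bar> \<partial>M) + (\<integral>x. \<bar>f x - h x\<bar> \<partial>M)"
proof -
  have "(\<integral>x. \<bar>g x - h x\<bar> \<partial>M) \<le> (\<integral>x. \<bar>f x - g x\<bar> + \<bar>f x - h x\<bar> \<partial>M)"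
    using assms by (intro integral_mono) auto
  also have "\<dots> = (\<integral>x. \<bar>f x - g x\<bar> \<partial>M) + (\<integral>x. \<bar>f x - h x\<bar> \<partial>M)"
    using assms by simp
  finally show ?thesis .
qed

text \<open>By Bayes' rule, \<pi> x * g x / c is the density of X given M = 0.\<close>
context
  fixes g \<pi> :: "real \<Rightarrow> real" and c :: real
  assumes g: "is_density g"
    and \<pi>_meas: "\<pi> \<in> borel_measurable borel"
    and \<pi>_range: "\<And>x. 0 \<le> \<pi> x \<and> \<pi> x \<le> 1"
  defines "c \<equiv> \<integral>x. \<pi> x * g x \<partial>lborel"
  assumes c_pos: "0 < c"
begin

lemma integrable_observed_power: "integrable lborel (\<lambda>x. \<pi> x ^ n * g x)"
proof (rule Bochner_Integration.integrable_bound)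
  note G = is_densityD[OF g]
  show "integrable lborel g" by (rule G(3))
  show "(\<lambda>x. \<pi> x ^ n * g x) \<in> borel_measurable lborel" using \<pi>_meas G(1) by measurable
  have "\<pi> x ^ n * g x \<le> g x" for x
    using \<pi>_range[of x] G(2)[of x] by (intro mult_left_le_one_le) (auto intro: power_le_one)
  then show "AE x in lborel. norm (\<pi> x ^ n * g x) \<le> norm (g x)"
    using \<pi>_range G(2) by (intro AE_I2) simp
qed

lemma is_density_observed: "is_density (\<lambda>x. \<pi> x * g x / c)"
  using integrable_observed_power[of 1] is_densityD[OF g] \<pi>_meas \<pi>_range c_pos
  by (intro is_densityI) (auto simp: c_def)

lemma KL_div_observed_le_variance:
  "KL_div (\<lambda>x. \<pi> x * g x / c) g \<le> ereal ((\<integral>x. (\<pi> x - c)\<^sup>2 * g x \<partial>lborel) / c\<^sup>2)"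
proof -
  have "KL_div (\<lambda>x. \<pi> x / c * g x) g \<le> ereal (\<integral>x. (\<pi> x / c - 1)\<^sup>2 * g x \<partial>lborel)"
    using integrable_observed_power[of 2] integrable_observed_power[of 1] \<pi>_meas \<pi>_range c_pos
    by (intro KL_div_le_chi_square[OF g]) (auto simp: c_def power_divide)
  moreover have "\<pi> x / c - 1 = (\<pi> x - c) / c" for x
    using c_pos by (simp add: field_simps)
  then have "(\<pi> x / c - 1)\<^sup>2 * g x = (\<pi> x - c)\<^sup>2 * g x / c\<^sup>2" for x
    by (simp add: power_divide)
  ultimately show ?thesis by simp
qed

end

theorem theorem5:
  fixes f :: "'p \<Rightarrow> real \<Rightarrow> real"   \<comment> \<open>density of the model P_theta\<close>
    and \<Theta> :: "'p set"
    and \<theta>s \<theta>inf :: 'p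
    and \<pi> :: "real \<Rightarrow> real"          \<comment> \<open>pi(x) = P[M = 0 | X = x]\<close>
  assumes dens: "\<And>\<theta>. \<theta> \<in> \<Theta> \<Longrightarrow> is_density (f \<theta>)"
    and \<theta>s: "\<theta>s \<in> \<Theta>"                 \<comment> \<open>well specified: P_X = P_theta*\<close>
    and \<pi>_meas: "\<pi> \<in> borel_measurable borel"
    and \<pi>_range: "\<And>x. 0 \<le> \<pi> x \<and> \<pi> x \<le> 1"
    and \<pi>_pos: "(\<integral>x. \<pi> x * f \<theta>s x \<partial>lborel) > 0"
    and \<theta>inf: "\<theta>inf \<in> \<Theta>"
    and argmin: "\<And>\<theta>. \<theta> \<in> \<Theta> \<Longrightarrow>
        KL_div (\<lambda>x. \<pi> x * f \<theta>s x / (\<integral>y. \<pi> y * f \<theta>s y \<partial>lborel)) (f \<theta>inf)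
        \<le> KL_div (\<lambda>x. \<pi> x * f \<theta>s x / (\<integral>y. \<pi> y * f \<theta>s y \<partial>lborel)) (f \<theta>)"
  shows "(TV_dist (density lborel (f \<theta>inf)) (density lborel (f \<theta>s)))\<^sup>2
         \<le> 2 * (\<integral>x. (\<pi> x - (\<integral>y. \<pi> y * f \<theta>s y \<partial>lborel))\<^sup>2 * f \<theta>s x \<partial>lborel)
             / (\<integral>y. \<pi> y * f \<theta>s y \<partial>lborel)\<^sup>2"
proof -
  define g c where "g = f \<theta>s" and "c = (\<integral>y. \<pi> y * g y \<partial>lborel)"
  define p where "p = (\<lambda>x. \<pi> x * g x / c)"
  define K where "K = (\<integral>x. (\<pi> x - c)\<^sup>2 * g x \<partial>lborel) / c\<^sup>2"
  have G: "is_density g" and Q: "is_density (f \<theta>inf)"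
    using dens \<theta>s \<theta>inf by (simp_all add: g_def)
  have c_pos: "0 < c" using \<pi>_pos by (simp add: c_def g_def)
  have P: "is_density p"
    using is_density_observed[OF G \<pi>_meas \<pi>_range] c_pos by (simp add: p_def c_def)
  have KL_g: "KL_div p g \<le> ereal K"
    using KL_div_observed_le_variance[OF G \<pi>_meas \<pi>_range] c_pos by (simp add: p_def K_def c_def)
  moreover have "KL_div p (f \<theta>inf) \<le> KL_div p g"
    using argmin[OF \<theta>s] by (simp add: p_def c_def g_def)
  ultimately have KL_q: "KL_div p (f \<theta>inf) \<le> ereal K" by order
  have "0 \<le> K" unfolding K_def using is_densityD(2)[OF G] by (simp add: integral_nonneg)
  have "(\<integral>x. \<bar>f \<theta>inf x - g x\<bar> \<partial>lborel)
      \<le> (\<integral>x. \<bar>p x - f \<theta>inf x\<bar> \<partial>lborel) + (\<integral>x. \<bar>p x - g x\<bar> \<partial>lborel)"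
    using is_densityD(3)[OF P] is_densityD(3)[OF Q] is_densityD(3)[OF G]
    by (rule integral_abs_diff_triangle)
  also have "\<dots> \<le> 2 * sqrt (2 * K)"
    using integral_abs_diff_le_sqrt_KL_div[OF P Q KL_q] integral_abs_diff_le_sqrt_KL_div[OF P G KL_g]
    by simp
  finally have "TV_dist (density lborel (f \<theta>inf)) (density lborel g) \<le> sqrt (2 * K)"
    using TV_dist_density_le_integral_abs_diff(2)[OF Q G] by simp
  then have "(TV_dist (density lborel (f \<theta>inf)) (density lborel g))\<^sup>2 \<le> 2 * K"
    using TV_dist_density_le_integral_abs_diff(1)[OF Q G] \<open>0 \<le> K\<close>
    by (metis power_mono real_sqrt_pow2 mult_nonneg_nonneg zero_le_numeral)
  then show ?thesis by (simp add: K_def c_def g_def)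
qed

end
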